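(* Let $f,g\in\mathcal{H}$ with $f\neq g$ as germs. Then there is no real $M>0$ such that $|f(x)|\le M|g(x)|$ and $|g(x)|\le M|f(x)|$ hold for all sufficiently large $x$.
   Context: All functions are real-valued functions defined on some interval $(a,\infty)$. Two such functions are identified if they agree for all sufficiently large $x$; these equivalence classes are germs at $+\infty$. Write $\ln^{(k)}$ for the $k$-fold iterated natural logarithm, with $\ln^{(0)}(x)=x$. Let $\mathcal{H}$ be the smallest set of germs at $+\infty$ satisfying: (i) $\ln^{(k)}\in\mathcal{H}$ for every integer $k\ge0$; (ii) if $f\in\mathcal{H}$, then $\exp\circ f\in\mathcal{H}$, and if moreover $f$ is eventually positive, then $f^\alpha\in\mathcal{H}$ for every real $\alpha>0$; (iii) if $f,g\in\mathcal{H}$ and $f\ne g$ (as germs), then $fg\in\mathcal{H}$; (iv) if $f,g\in\mathcal{H}$ and $f(x)/g(x)\to+\infty$, then $f/g\in\mathcal{H}$. Two functions $f,g$ lie in the same Archimedean class ("commutative big O", $f=O(g)$) if there is $M>0$ with $|f(x)|\le M|g(x)|$ and $|g(x)|\le M|f(x)|$ for all large $x$. *)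

theory Defs
  imports "HOL-Analysis.Analysis"
begin

text \<open>Germs at +infinity are represented by functions real => real; two functions
  represent the same germ iff they agree eventually (filter at_top).\<close>

definition same_germ :: "(real \<Rightarrow> real) \<Rightarrow> (real \<Rightarrow> real) \<Rightarrow> bool" where
  "same_germ f g \<longleftrightarrow> (\<forall>\<^sub>F x in at_top. f x = g x)"

inductive Hclass :: "(real \<Rightarrow> real) \<Rightarrow> bool" where
  iter_ln: "Hclass (ln ^^ k)"
| exp_comp: "Hclass f \<Longrightarrow> Hclass (\<lambda>x. exp (f x))"
| pow: "Hclass f \<Longrightarrow> (\<forall>\<^sub>F x in at_top. f x > 0) \<Longrightarrow> \<alpha> > 0 \<Longrightarrow> Hclass (\<lambda>x. f x powr \<alpha>)"
| mult: "Hclass f \<Longrightarrow> Hclass g \<Longrightarrow> \<not> same_germ f g \<Longrightarrow> Hclass (\<lambda>x. f x * g x)"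
| divide: "Hclass f \<Longrightarrow> Hclass g \<Longrightarrow> filterlim (\<lambda>x. f x / g x) at_top at_top
            \<Longrightarrow> Hclass (\<lambda>x. f x / g x)"
| germ: "Hclass f \<Longrightarrow> same_germ f g \<Longrightarrow> Hclass g"

end

theory Submission imports Defs "HOL-Real_Asymp.Real_Asymp" begin

(* Stratify the class H by the nesting depth of the generating rules:
   Hlevel n f says that f is generated with at most n rule applications on top of
   the iterated logarithms.  Every function in H tends to +infinity, and the key
   claim is that any two functions f, g of the same level are "comparable": f/g
   tends to +infinity, tends to 0, or f and g have the same germ.  Level 0 consists of iterated logarithms, whose
   ratios are explicit.  At level n+1, ln f - ln g is a real linear combination of
   level-n functions; a linear combination of pairwise comparable functions
   tending to infinity is eventually 0 or asymptotic to c*h with c ~= 0, hence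
   tends to +infinity, -infinity, or vanishes, and exponentiating gives
   comparability of f and g.  Finally, for positive comparable functions with
   different germs the ratio tends to 0 or infinity, which rules out two-sided
   bounds |f| <= M|g|, |g| <= M|f|. *)

lemma same_germ_refl: "same_germ f f"
  by (simp add: same_germ_def)

lemma same_germ_sym: "same_germ f g \<Longrightarrow> same_germ g f"
  unfolding same_germ_def by (auto elim: eventually_mono)

lemma same_germ_trans: "same_germ f g \<Longrightarrow> same_germ g h \<Longrightarrow> same_germ f h"
  unfolding same_germ_def by (auto elim: eventually_elim2)

lemma eventually_pos_at_top:
  "filterlim (f :: real \<Rightarrow> real) at_top at_top \<Longrightarrow> \<forall>\<^sub>F x in at_top. f x > 0"
  unfolding filterlim_at_top_dense by blast

section \<open>Comparability of germs\<close>

definition comparable :: "(real \<Rightarrow> real) \<Rightarrow> (real \<Rightarrow> real) \<Rightarrow> bool" where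
  "comparable f g \<longleftrightarrow> filterlim (\<lambda>x. f x / g x) at_top at_top
     \<or> ((\<lambda>x. f x / g x) \<longlongrightarrow> 0) at_top \<or> same_germ f g"

lemma comparable_germ:
  assumes "comparable f g" "same_germ f f'" "same_germ g g'"
  shows "comparable f' g'"
proof -
  have e: "\<forall>\<^sub>F x in at_top. f x / g x = f' x / g' x"
    using assms(2,3) unfolding same_germ_def by eventually_elim simp
  show ?thesis
    using assms(1) filterlim_cong[OF refl refl e] tendsto_cong[OF e]
      same_germ_trans[OF same_germ_trans[OF same_germ_sym[OF assms(2)]] assms(3)]
    unfolding comparable_def by blast
qed

lemma comparable_not_same_order:
  fixes f g :: "real \<Rightarrow> real"
  assumes cmp: "comparable f g" and ne: "\<not> same_germ f g"
    and fpos: "\<forall>\<^sub>F x in at_top. f x > 0" and gpos: "\<forall>\<^sub>F x in at_top. g x > 0"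
    and M: "M > 0"
  shows "\<not> (\<forall>\<^sub>F x in at_top. \<bar>f x\<bar> \<le> M * \<bar>g x\<bar> \<and> \<bar>g x\<bar> \<le> M * \<bar>f x\<bar>)"
proof
  assume B: "\<forall>\<^sub>F x in at_top. \<bar>f x\<bar> \<le> M * \<bar>g x\<bar> \<and> \<bar>g x\<bar> \<le> M * \<bar>f x\<bar>"
  have ratio_bounds: "\<forall>\<^sub>F x in at_top. 1 / M \<le> f x / g x \<and> f x / g x \<le> M"
    using B fpos gpos by eventually_elim (use M in \<open>auto simp: field_simps\<close>)
  from cmp ne consider
    (infinity) "filterlim (\<lambda>x. f x / g x) at_top at_top"
  | (zero) "((\<lambda>x. f x / g x) \<longlongrightarrow> 0) at_top"
    unfolding comparable_def by blast
  then have "\<forall>\<^sub>F x::real in at_top. False"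
  proof cases
    case infinity
    then have "\<forall>\<^sub>F x in at_top. M + 1 \<le> f x / g x"
      unfolding filterlim_at_top by blast
    with ratio_bounds show ?thesis by eventually_elim linarith
  next
    case zero
    have "\<forall>\<^sub>F x in at_top. f x / g x < 1 / M"
      by (rule order_tendstoD(2)[OF zero]) (simp add: M)
    with ratio_bounds show ?thesis by eventually_elim linarith
  qed
  then show False by simp
qed

section \<open>Iterated logarithms\<close>

lemma ln_iter_at_top: "filterlim (ln ^^ k :: real \<Rightarrow> real) at_top at_top"
proof (induction k)
  case 0 then show ?case by (simp add: filterlim_ident id_def)
next
  case (Suc k)
  have "filterlim (\<lambda>x::real. ln ((ln ^^ k) x)) at_top at_top"
    by (intro filterlim_compose[OF ln_at_top] Suc)
  then show ?case by (simp add: o_def)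
qed

lemma ln_iter_le: "\<forall>\<^sub>F y in at_top. (ln ^^ m) y \<le> (y::real)"
proof (induction m)
  case 0 then show ?case by simp
next
  case (Suc m)
  from Suc eventually_pos_at_top[OF ln_iter_at_top[of m]] show ?case
    by eventually_elim (use ln_le_minus_one in \<open>force\<close>)
qed

text \<open>Each further logarithm is negligible: \<open>y / ln^(m+1) y \<rightarrow> \<infinity>\<close>, since it
  dominates \<open>y / ln y\<close>.\<close>

lemma ratio_ln_iter_Suc: "filterlim (\<lambda>y::real. y / (ln ^^ Suc m) y) at_top at_top"
proof (rule filterlim_at_top_mono)
  show "filterlim (\<lambda>y::real. y / ln y) at_top at_top" by real_asymp
  have gt1: "\<forall>\<^sub>F y in at_top. (ln ^^ m) y > (1::real)"
    using ln_iter_at_top[of m] unfolding filterlim_at_top_dense by blast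
  from gt1 ln_iter_le[of m] eventually_gt_at_top[of "1::real"]
  show "\<forall>\<^sub>F y in at_top. y / ln y \<le> (y::real) / (ln ^^ Suc m) y"
  proof eventually_elim
    case (elim y)
    have "0 < ln ((ln ^^ m) y)" "ln ((ln ^^ m) y) \<le> ln y" using elim by simp_all
    then show ?case using elim by (simp add: frac_le)
  qed
qed

lemma ratio_ln_iter:
  assumes "k < j"
  shows "filterlim (\<lambda>x::real. (ln ^^ k) x / (ln ^^ j) x) at_top at_top"
proof -
  obtain m where j: "j = Suc m + k"
    using assms by (auto simp: less_iff_Suc_add)
  have "filterlim (\<lambda>x::real. (\<lambda>y. y / (ln ^^ Suc m) y) ((ln ^^ k) x)) at_top at_top"
    by (rule filterlim_compose[OF ratio_ln_iter_Suc ln_iter_at_top])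
  then show ?thesis unfolding j funpow_add by (simp add: o_def)
qed

lemma comparable_ln_iter: "comparable (ln ^^ k) (ln ^^ j)"
proof -
  consider "k = j" | "k < j" | "j < k" by linarith
  then show ?thesis
  proof cases
    case 3
    have "((\<lambda>x::real. inverse ((ln ^^ j) x / (ln ^^ k) x)) \<longlongrightarrow> 0) at_top"
      by (rule tendsto_inverse_0_at_top[OF ratio_ln_iter[OF 3]])
    then show ?thesis by (simp add: comparable_def)
  qed (use ratio_ln_iter[of k j] in \<open>simp_all add: comparable_def same_germ_refl\<close>)
qed

section \<open>Linear combinations of germs\<close>

definition lin_sum :: "(real \<times> (real \<Rightarrow> real)) list \<Rightarrow> real \<Rightarrow> real" where
  "lin_sum xs x = (\<Sum>p\<leftarrow>xs. fst p * snd p x)"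

lemma lin_sum_Nil [simp]: "lin_sum [] x = 0"
  by (simp add: lin_sum_def)

lemma lin_sum_Cons [simp]: "lin_sum (p # xs) x = fst p * snd p x + lin_sum xs x"
  by (simp add: lin_sum_def)

lemma lin_sum_append [simp]: "lin_sum (xs @ ys) x = lin_sum xs x + lin_sum ys x"
  by (induction xs) auto

lemma lin_sum_scale: "lin_sum (map (\<lambda>p. (a * fst p, snd p)) xs) x = a * lin_sum xs x"
  by (induction xs) (auto simp: algebra_simps)

lemma lin_sum_collect:
  "\<forall>\<^sub>F x in at_top. lin_sum xs x =
     (\<Sum>p\<leftarrow>filter (\<lambda>p. same_germ (snd p) h) xs. fst p) * h x
     + lin_sum (filter (\<lambda>p. \<not> same_germ (snd p) h) xs) x"
proof (induction xs)
  case (Cons p xs)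
  show ?case
  proof (cases "same_germ (snd p) h")
    case True
    from Cons True[unfolded same_germ_def] show ?thesis
      by eventually_elim (simp add: True algebra_simps)
  qed (use Cons in \<open>eventually_elim, simp add: algebra_simps\<close>)
qed simp

definition lincomb :: "((real \<Rightarrow> real) \<Rightarrow> bool) \<Rightarrow> (real \<Rightarrow> real) \<Rightarrow> bool" where
  "lincomb P w \<longleftrightarrow> (\<exists>xs. (\<forall>p\<in>set xs. P (snd p)) \<and> (\<forall>\<^sub>F x in at_top. w x = lin_sum xs x))"

lemma lincomb_single: "P h \<Longrightarrow> (\<forall>\<^sub>F x in at_top. w x = c * h x) \<Longrightarrow> lincomb P w"
  unfolding lincomb_def by (rule exI[of _ "[(c, h)]"]) auto

lemma lincomb_add:
  assumes "lincomb P u" "lincomb P v" "\<forall>\<^sub>F x in at_top. w x = u x + v x"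
  shows "lincomb P w"
proof -
  obtain xs ys where "\<forall>p\<in>set xs. P (snd p)" "\<forall>p\<in>set ys. P (snd p)"
    and u: "\<forall>\<^sub>F x in at_top. u x = lin_sum xs x" and v: "\<forall>\<^sub>F x in at_top. v x = lin_sum ys x"
    using assms(1,2) unfolding lincomb_def by blast
  moreover from u v assms(3) have "\<forall>\<^sub>F x in at_top. w x = lin_sum (xs @ ys) x"
    by eventually_elim simp
  ultimately show ?thesis
    unfolding lincomb_def by (intro exI[of _ "xs @ ys"]) auto
qed

lemma lincomb_scale:
  assumes "lincomb P u" "\<forall>\<^sub>F x in at_top. w x = a * u x"
  shows "lincomb P w"
proof -
  obtain xs where "\<forall>p\<in>set xs. P (snd p)" and u: "\<forall>\<^sub>F x in at_top. u x = lin_sum xs x"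
    using assms(1) unfolding lincomb_def by blast
  moreover from u assms(2)
  have "\<forall>\<^sub>F x in at_top. w x = lin_sum (map (\<lambda>p. (a * fst p, snd p)) xs) x"
    by eventually_elim (simp add: lin_sum_scale)
  ultimately show ?thesis
    unfolding lincomb_def by (intro exI[of _ "map (\<lambda>p. (a * fst p, snd p)) xs"]) auto
qed

lemma lincomb_cong: "lincomb P u \<Longrightarrow> (\<forall>\<^sub>F x in at_top. w x = u x) \<Longrightarrow> lincomb P w"
  by (rule lincomb_scale[where a = 1]) simp_all

lemma lincomb_mono: "lincomb P w \<Longrightarrow> (\<And>h. P h \<Longrightarrow> Q h) \<Longrightarrow> lincomb Q w"
  unfolding lincomb_def by blast

lemma dominant_term_add:
  fixes h h2 v :: "real \<Rightarrow> real"
  assumes cmp: "comparable h h2" and ne: "\<not> same_germ h h2"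
    and hnz: "\<forall>\<^sub>F x in at_top. h x \<noteq> 0" and h2nz: "\<forall>\<^sub>F x in at_top. h2 x \<noteq> 0"
    and v: "((\<lambda>x. v x / h2 x) \<longlongrightarrow> c2) at_top"
  shows "((\<lambda>x. (C * h x + v x) / h x) \<longlongrightarrow> C) at_top
       \<or> ((\<lambda>x. (C * h x + v x) / h2 x) \<longlongrightarrow> c2) at_top"
proof -
  from cmp ne consider
    (infinity) "filterlim (\<lambda>x. h x / h2 x) at_top at_top"
  | (zero) "((\<lambda>x. h x / h2 x) \<longlongrightarrow> 0) at_top"
    unfolding comparable_def by blast
  then show ?thesis
  proof cases
    case infinity
    have "((\<lambda>x. C + v x / h2 x * inverse (h x / h2 x)) \<longlongrightarrow> C + c2 * 0) at_top"
      by (intro tendsto_intros v tendsto_inverse_0_at_top[OF infinity])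
    moreover have "\<forall>\<^sub>F x in at_top. C + v x / h2 x * inverse (h x / h2 x) = (C * h x + v x) / h x"
      using hnz h2nz by eventually_elim (simp add: field_simps)
    ultimately have "((\<lambda>x. (C * h x + v x) / h x) \<longlongrightarrow> C + c2 * 0) at_top"
      by (rule Lim_transform_eventually)
    then show ?thesis by simp
  next
    case zero
    have "((\<lambda>x. C * (h x / h2 x) + v x / h2 x) \<longlongrightarrow> C * 0 + c2) at_top"
      by (intro tendsto_intros v zero)
    moreover have "\<forall>\<^sub>F x in at_top. C * (h x / h2 x) + v x / h2 x = (C * h x + v x) / h2 x"
      using h2nz by eventually_elim (simp add: field_simps)
    ultimately have "((\<lambda>x. (C * h x + v x) / h2 x) \<longlongrightarrow> C * 0 + c2) at_top"
      by (rule Lim_transform_eventually)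
    then show ?thesis by simp
  qed
qed

text \<open>Proof by strong induction on the length: the terms with the germ of
  the first function are collected, and the remaining shorter combination is
  handled by induction and \<open>dominant_term_add\<close>.\<close>

lemma lin_sum_dominant:
  assumes top: "\<And>h. P h \<Longrightarrow> filterlim h at_top at_top"
    and cmp: "\<And>f g. P f \<Longrightarrow> P g \<Longrightarrow> comparable f g"
  shows "(\<forall>p\<in>set xs. P (snd p)) \<Longrightarrow> (\<forall>\<^sub>F x in at_top. lin_sum xs x = 0) \<or>
     (\<exists>c h. c \<noteq> 0 \<and> h \<in> snd ` set xs \<and> ((\<lambda>x. lin_sum xs x / h x) \<longlongrightarrow> c) at_top)"
proof (induction xs rule: length_induct)
  case (1 xs)
  show ?case
  proof (cases xs)
    case (Cons a rest)
    obtain c h where a: "a = (c, h)" by fastforce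
    define Os where "Os = filter (\<lambda>p. \<not> same_germ (snd p) h) rest"
    define C where "C = c + (\<Sum>p\<leftarrow>filter (\<lambda>p. same_germ (snd p) h) rest. fst p)"
    have split: "\<forall>\<^sub>F x in at_top. lin_sum xs x = C * h x + lin_sum Os x"
      using lin_sum_collect[of rest h]
      by eventually_elim (simp add: C_def Os_def Cons a algebra_simps)
    have PO: "\<forall>p\<in>set Os. P (snd p)" and hP: "P h" and hin: "h \<in> snd ` set xs"
      using "1.prems" by (auto simp: Os_def Cons a image_iff intro: bexI[of _ "(c, h)"])
    have hnz: "\<forall>\<^sub>F x in at_top. h x \<noteq> 0"
      using eventually_pos_at_top[OF top[OF hP]] by (auto elim: eventually_mono)
    have "length Os < length xs"
      unfolding Os_def Cons by (simp add: le_imp_less_Suc)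
    with "1.IH" PO consider
      (zero) "\<forall>\<^sub>F x in at_top. lin_sum Os x = 0"
    | (dominant) c2 h2 where "c2 \<noteq> 0" "h2 \<in> snd ` set Os"
        "((\<lambda>x. lin_sum Os x / h2 x) \<longlongrightarrow> c2) at_top"
      by blast
    then show ?thesis
    proof cases
      case zero
      show ?thesis
      proof (cases "C = 0")
        case True
        have "\<forall>\<^sub>F x in at_top. lin_sum xs x = 0"
          using split zero by eventually_elim (simp add: True)
        then show ?thesis by blast
      next
        case False
        have "\<forall>\<^sub>F x in at_top. lin_sum xs x / h x = C"
          using split zero hnz by eventually_elim simp
        then have "((\<lambda>x. lin_sum xs x / h x) \<longlongrightarrow> C) at_top"
          by (rule tendsto_eventually)
        then show ?thesis using False hin by blast
      qed
    next
      case dominant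
      have ne: "\<not> same_germ h h2" and h2P: "P h2" and h2in: "h2 \<in> snd ` set xs"
        using dominant(2) PO by (auto simp: Os_def Cons same_germ_sym)
      have h2nz: "\<forall>\<^sub>F x in at_top. h2 x \<noteq> 0"
        using eventually_pos_at_top[OF top[OF h2P]] by (auto elim: eventually_mono)
      have e: "\<forall>\<^sub>F x in at_top. (C * h x + lin_sum Os x) / h' x = lin_sum xs x / h' x" for h'
        using split by (auto elim: eventually_mono)
      have "C = 0 \<Longrightarrow> ((\<lambda>x. (C * h x + lin_sum Os x) / h2 x) \<longlongrightarrow> c2) at_top"
        using dominant(3) by simp
      with dominant_term_add[OF cmp[OF hP h2P] ne hnz h2nz dominant(3), of C]
      have "C \<noteq> 0 \<and> ((\<lambda>x. (C * h x + lin_sum Os x) / h x) \<longlongrightarrow> C) at_top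
          \<or> ((\<lambda>x. (C * h x + lin_sum Os x) / h2 x) \<longlongrightarrow> c2) at_top"
        by blast
      then have "C \<noteq> 0 \<and> ((\<lambda>x. lin_sum xs x / h x) \<longlongrightarrow> C) at_top
          \<or> ((\<lambda>x. lin_sum xs x / h2 x) \<longlongrightarrow> c2) at_top"
        using Lim_transform_eventually[OF _ e] by blast
      then show ?thesis using dominant(1) hin h2in by blast
    qed
  qed simp
qed

lemma lincomb_trichotomy:
  assumes top: "\<And>h. P h \<Longrightarrow> filterlim h at_top at_top"
    and cmp: "\<And>f g. P f \<Longrightarrow> P g \<Longrightarrow> comparable f g"
    and w: "lincomb P w"
  shows "filterlim w at_top at_top \<or> filterlim w at_bot at_top \<or> (\<forall>\<^sub>F x in at_top. w x = 0)"
proof -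
  obtain xs where P: "\<forall>p\<in>set xs. P (snd p)" and wxs: "\<forall>\<^sub>F x in at_top. w x = lin_sum xs x"
    using w unfolding lincomb_def by blast
  from lin_sum_dominant[OF top cmp P] show ?thesis
  proof
    assume "\<forall>\<^sub>F x in at_top. lin_sum xs x = 0"
    with wxs have "\<forall>\<^sub>F x in at_top. w x = 0" by eventually_elim simp
    then show ?thesis by blast
  next
    assume "\<exists>c h. c \<noteq> 0 \<and> h \<in> snd ` set xs \<and> ((\<lambda>x. lin_sum xs x / h x) \<longlongrightarrow> c) at_top"
    then obtain c h where c: "c \<noteq> 0" and "h \<in> snd ` set xs"
      and lim: "((\<lambda>x. lin_sum xs x / h x) \<longlongrightarrow> c) at_top"
      by blast
    with P have ht: "filterlim h at_top at_top" using top by auto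
    have e: "\<forall>\<^sub>F x in at_top. lin_sum xs x / h x * h x = w x"
      using wxs eventually_pos_at_top[OF ht] by eventually_elim simp
    consider (pos) "c > 0" | (neg) "c < 0" using c by linarith
    then show ?thesis
    proof cases
      case pos
      from filterlim_tendsto_pos_mult_at_top[OF lim pos ht] show ?thesis
        using filterlim_cong[OF refl refl e] by blast
    next
      case neg
      from filterlim_tendsto_neg_mult_at_bot[OF lim neg ht] show ?thesis
        using filterlim_cong[OF refl refl e] by blast
    qed
  qed
qed

section \<open>Stratification of H by depth\<close>

inductive Hlevel :: "nat \<Rightarrow> (real \<Rightarrow> real) \<Rightarrow> bool" where
  ln_iter: "Hlevel n (ln ^^ k)"
| exp_comp: "Hlevel n f \<Longrightarrow> Hlevel (Suc n) (\<lambda>x. exp (f x))"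
| pow: "Hlevel n f \<Longrightarrow> (\<forall>\<^sub>F x in at_top. f x > 0) \<Longrightarrow> \<alpha> > 0
          \<Longrightarrow> Hlevel (Suc n) (\<lambda>x. f x powr \<alpha>)"
| mult: "Hlevel n f \<Longrightarrow> Hlevel n g \<Longrightarrow> Hlevel (Suc n) (\<lambda>x. f x * g x)"
| divide: "Hlevel n f \<Longrightarrow> Hlevel n g \<Longrightarrow> filterlim (\<lambda>x. f x / g x) at_top at_top
            \<Longrightarrow> Hlevel (Suc n) (\<lambda>x. f x / g x)"
| germ: "Hlevel n f \<Longrightarrow> same_germ f g \<Longrightarrow> Hlevel n g"
| raise: "Hlevel n f \<Longrightarrow> Hlevel (Suc n) f"

lemma Hlevel_mono:
  assumes "Hlevel n f" "n \<le> m"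
  shows "Hlevel m f"
  using assms(2,1) by (induction m rule: dec_induct) (auto intro: Hlevel.raise)

lemma lincomb_Hlevel_mono: "lincomb (Hlevel m) w \<Longrightarrow> m \<le> n \<Longrightarrow> lincomb (Hlevel n) w"
  by (erule lincomb_mono) (rule Hlevel_mono)

lemma Hclass_Hlevel: "Hclass f \<Longrightarrow> \<exists>n. Hlevel n f"
proof (induction rule: Hclass.induct)
  case (mult f g)
  then obtain n m where "Hlevel n f" "Hlevel m g" by blast
  then have "Hlevel (max n m) f" "Hlevel (max n m) g" by (auto intro: Hlevel_mono)
  then show ?case by (blast intro: Hlevel.mult)
next
  case (divide f g)
  then obtain n m where "Hlevel n f" "Hlevel m g" by blast
  then have "Hlevel (max n m) f" "Hlevel (max n m) g" by (auto intro: Hlevel_mono)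
  then show ?case using divide by (blast intro: Hlevel.divide)
qed (blast intro: Hlevel.intros)+

lemma Hclass_common_level:
  assumes "Hclass f" "Hclass g"
  obtains n where "Hlevel n f" "Hlevel n g"
proof -
  obtain n m where "Hlevel n f" "Hlevel m g" using assms Hclass_Hlevel by blast
  then have "Hlevel (max n m) f" "Hlevel (max n m) g" by (auto intro: Hlevel_mono)
  then show ?thesis by (rule that)
qed

lemma Hlevel_at_top: "Hlevel n f \<Longrightarrow> filterlim f at_top at_top"
proof (induction rule: Hlevel.induct)
  case (exp_comp n f)
  show ?case by (rule filterlim_compose[OF exp_at_top exp_comp.IH])
next
  case (pow n f \<alpha>)
  have "filterlim (\<lambda>y::real. y powr \<alpha>) at_top at_top" using pow by real_asymp
  then show ?case using pow.IH by (rule filterlim_compose)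
next
  case (mult n f g)
  show ?case by (rule filterlim_at_top_mult_at_top[OF mult.IH])
next
  case (germ n f g)
  then show ?case
    using filterlim_cong[OF refl refl, of f g at_top] unfolding same_germ_def by blast
qed (simp_all add: ln_iter_at_top)

lemma Hlevel_pos: "Hlevel n f \<Longrightarrow> \<forall>\<^sub>F x in at_top. f x > 0"
  by (rule eventually_pos_at_top[OF Hlevel_at_top])

lemma Hlevel_0: "Hlevel n f \<Longrightarrow> n = 0 \<Longrightarrow> \<exists>k. same_germ (ln ^^ k) f"
  by (induction rule: Hlevel.induct) (auto intro: same_germ_refl same_germ_trans)

text \<open>The logarithm of a function of level \<open>n\<close> is a linear combination of functions
  of level \<open>n - 1\<close>: logarithms turn products, quotients and powers into sums.\<close>

lemma Hlevel_ln_lincomb: "Hlevel n f \<Longrightarrow> lincomb (Hlevel (n - 1)) (\<lambda>x. ln (f x))"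
proof (induction rule: Hlevel.induct)
  case (ln_iter n k)
  show ?case
    by (rule lincomb_single[where h = "ln ^^ Suc k" and c = 1]) (rule Hlevel.ln_iter, simp)
next
  case (exp_comp n f)
  show ?case by (rule lincomb_single[where h = f and c = 1]) (simp_all add: exp_comp.hyps)
next
  case (pow n f \<alpha>)
  have "lincomb (Hlevel n) (\<lambda>x. ln (f x))"
    using pow.IH by (rule lincomb_Hlevel_mono) simp
  then have "lincomb (Hlevel n) (\<lambda>x. ln (f x powr \<alpha>))"
    by (rule lincomb_scale[where a = \<alpha>]) (use pow.hyps(2) in \<open>eventually_elim, simp add: ln_powr\<close>)
  then show ?case by simp
next
  case (mult n f g)
  have "lincomb (Hlevel n) (\<lambda>x. ln (f x))" "lincomb (Hlevel n) (\<lambda>x. ln (g x))"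
    using mult.IH by (auto elim: lincomb_Hlevel_mono)
  moreover have "\<forall>\<^sub>F x in at_top. ln (f x * g x) = ln (f x) + ln (g x)"
    using Hlevel_pos[OF mult.hyps(1)] Hlevel_pos[OF mult.hyps(2)]
    by eventually_elim (simp add: ln_mult)
  ultimately have "lincomb (Hlevel n) (\<lambda>x. ln (f x * g x))" by (rule lincomb_add)
  then show ?case by simp
next
  case (divide n f g)
  have "lincomb (Hlevel n) (\<lambda>x. ln (f x))" "lincomb (Hlevel n) (\<lambda>x. ln (g x))"
    using divide.IH by (auto elim: lincomb_Hlevel_mono)
  then have "lincomb (Hlevel n) (\<lambda>x. ln (f x))" "lincomb (Hlevel n) (\<lambda>x. - ln (g x))"
    by (auto intro: lincomb_scale[where a = "-1"])
  moreover have "\<forall>\<^sub>F x in at_top. ln (f x / g x) = ln (f x) + - ln (g x)"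
    using Hlevel_pos[OF divide.hyps(1)] Hlevel_pos[OF divide.hyps(2)]
    by eventually_elim (simp add: ln_div)
  ultimately have "lincomb (Hlevel n) (\<lambda>x. ln (f x / g x))" by (rule lincomb_add)
  then show ?case by simp
next
  case (germ n f g)
  show ?case
    using germ.IH by (rule lincomb_cong) (use germ.hyps(2) in \<open>auto simp: same_germ_def elim: eventually_mono\<close>)
next
  case (raise n f)
  show ?case using raise.IH by (rule lincomb_Hlevel_mono) simp
qed

lemma Hlevel_comparable: "Hlevel n f \<Longrightarrow> Hlevel n g \<Longrightarrow> comparable f g"
proof (induction n arbitrary: f g)
  case 0
  obtain k j where "same_germ (ln ^^ k) f" "same_germ (ln ^^ j) g"
    using Hlevel_0[OF "0.prems"(1)] Hlevel_0[OF "0.prems"(2)] by blast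
  then show ?case using comparable_germ[OF comparable_ln_iter] by blast
next
  case (Suc n)
  let ?d = "\<lambda>x. ln (f x) - ln (g x)"
  have ln_f: "lincomb (Hlevel n) (\<lambda>x. ln (f x))" and ln_g: "lincomb (Hlevel n) (\<lambda>x. ln (g x))"
    using Hlevel_ln_lincomb[OF Suc.prems(1)] Hlevel_ln_lincomb[OF Suc.prems(2)] by simp_all
  have "lincomb (Hlevel n) (\<lambda>x. - ln (g x))"
    using ln_g by (rule lincomb_scale[where a = "-1"]) simp
  with ln_f have "lincomb (Hlevel n) ?d"
    by (rule lincomb_add) simp
  moreover have "\<And>h. Hlevel n h \<Longrightarrow> filterlim h at_top at_top"
    by (rule Hlevel_at_top)
  ultimately consider
    (infinity) "filterlim ?d at_top at_top"
  | (neg_infinity) "filterlim ?d at_bot at_top"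
  | (zero) "\<forall>\<^sub>F x in at_top. ?d x = 0"
    using lincomb_trichotomy[where P = "Hlevel n"] Suc.IH by blast
  moreover have fpos: "\<forall>\<^sub>F x in at_top. f x > 0" and gpos: "\<forall>\<^sub>F x in at_top. g x > 0"
    using Suc.prems by (simp_all add: Hlevel_pos)
  moreover have e: "\<forall>\<^sub>F x in at_top. exp (?d x) = f x / g x"
    using fpos gpos by eventually_elim (simp add: exp_diff)
  ultimately show ?case
  proof cases
    case infinity
    then show ?thesis unfolding comparable_def
      using filterlim_compose[OF exp_at_top infinity] filterlim_cong[OF refl refl e] by blast
  next
    case neg_infinity
    then show ?thesis unfolding comparable_def
      using filterlim_compose[OF exp_at_bot neg_infinity] tendsto_cong[OF e] by blast
  next
    case zero
    have "same_germ f g"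
      unfolding same_germ_def using zero fpos gpos by eventually_elim simp
    then show ?thesis unfolding comparable_def by blast
  qed
qed

theorem mainTheorem3:
  fixes f g :: "real \<Rightarrow> real"
  assumes "Hclass f" and "Hclass g" and "\<not> same_germ f g"
  shows "\<not> (\<exists>M>0. \<forall>\<^sub>F x in at_top. \<bar>f x\<bar> \<le> M * \<bar>g x\<bar> \<and> \<bar>g x\<bar> \<le> M * \<bar>f x\<bar>)"
proof -
  obtain n where f: "Hlevel n f" and g: "Hlevel n g"
    using Hclass_common_level[OF assms(1,2)] .
  have "comparable f g" using f g by (rule Hlevel_comparable)
  moreover have "\<forall>\<^sub>F x in at_top. f x > 0" "\<forall>\<^sub>F x in at_top. g x > 0"
    using Hlevel_pos[OF f] Hlevel_pos[OF g] .
  ultimately show ?thesis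
    using comparable_not_same_order assms(3) by blast
qed

end
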